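(* Let $\mathbf{c}\in\mathbb{R}^n$, $\mathcal{K}=\{1,\dots,K\}$, and for each $k\in\mathcal{K}$ let $\mathcal{F}_k=\bigcup_{i\in\mathcal{D}_k}\mathcal{C}_{ki}$ with $\mathcal{D}_k$ finite and each $\mathcal{C}_{ki}\subset\mathbb{R}^n$ compact and convex. Define $$LR_{\mathcal{K}}(\boldsymbol{\lambda}_1,\dots,\boldsymbol{\lambda}_K)=\inf\Big\{\big(\mathbf{c}-\textstyle\sum_{k}\boldsymbol{\lambda}_k\big)^\top\mathbf{x}+\sum_{k}\boldsymbol{\lambda}_k^\top\mathbf{v}_k:\ \mathbf{x}\in\mathbb{R}^n,\ \mathbf{v}_k\in\mathcal{F}_k\ \forall k\Big\}.$$ For a partition $\mathcal{P}=\{\mathcal{J}_1,\dots,\mathcal{J}_P\}$ of $\mathcal{K}$ (nonempty, pairwise disjoint sets with union $\mathcal{K}$) and vectors $\boldsymbol{\mu}_1,\dots,\boldsymbol{\mu}_P\in\mathbb{R}^n$, define the partition relaxation $$L_{\mathcal{P}}(\boldsymbol{\mu}_1,\dots,\boldsymbol{\mu}_P)=\sum_{p=1}^P\min\Big\{\boldsymbol{\mu}_p^\top\mathbf{v}:\ \mathbf{v}\in\textstyle\bigcap_{k\in\mathcal{J}_p}\mathcal{F}_k\Big\}.$$ Then for any vectors $\boldsymbol{\lambda}_1,\dots,\boldsymbol{\lambda}_K\in\mathbb{R}^n$ and any partition $\mathcal{P}$ of $\mathcal{K}$, $$L_{\mathcal{P}}\Big(\sum_{j\in\mathcal{J}_1}\boldsymbol{\lambda}_j,\dots,\sum_{j\in\mathcal{J}_P}\boldsymbol{\lambda}_j\Big)\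 \ge\ LR_{\mathcal{K}}(\boldsymbol{\lambda}_1,\dots,\boldsymbol{\lambda}_K).$$
   Context: Convention: the minimum (infimum) over an empty set is $+\infty$. *)

theory Defs
  imports "HOL-Analysis.Analysis" "HOL-Library.Disjoint_Sets"
begin

text \<open>Lagrangian relaxation value LR_K(lambda_1..lambda_K), valued in extended reals
  (infimum over the empty set is +infinity).\<close>
definition LR :: "'a::euclidean_space \<Rightarrow> (nat \<Rightarrow> 'a set) \<Rightarrow> nat \<Rightarrow> (nat \<Rightarrow> 'a) \<Rightarrow> ereal" where
  "LR c F K lam = Inf {ereal ((c - (\<Sum>k\<in>{1..K}. lam k)) \<bullet> x + (\<Sum>k\<in>{1..K}. lam k \<bullet> v k))
       | x v. \<forall>k\<in>{1..K}. v k \<in> F k}"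

text \<open>Partition relaxation L_P(mu_J for J in P); the min over an empty set is +infinity.\<close>
definition LP :: "(nat \<Rightarrow> 'a::euclidean_space set) \<Rightarrow> nat set set \<Rightarrow> (nat set \<Rightarrow> 'a) \<Rightarrow> ereal" where
  "LP F P mu = (\<Sum>J\<in>P. Inf ((\<lambda>v. ereal (mu J \<bullet> v)) ` (\<Inter>k\<in>J. F k)))"

end

theory Submission
  imports Defs
begin

text \<open>Taking \<open>x = 0\<close> in the Lagrangian and letting all copies \<open>v\<^sub>k\<close>, \<open>k \<in> J\<close>, of a block
  \<open>J\<close> coincide with a minimiser of \<open>\<mu>\<^sub>J\<close> over \<open>\<Inter>\<^sub>k\<^sub>\<in>\<^sub>J F\<^sub>k\<close> gives an admissible point
  whose Lagrangian value is exactly \<open>L\<^sub>P\<close>. Minimisers exist by compactness; if some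
  block intersection is empty, \<open>L\<^sub>P = \<infinity>\<close>.\<close>

lemma sum_partition_on:
  fixes g :: "'a \<Rightarrow> 'b::comm_monoid_add"
  assumes "partition_on A P" "finite A"
  shows "(\<Sum>k\<in>A. g k) = (\<Sum>J\<in>P. \<Sum>k\<in>J. g k)"
proof -
  have union: "\<Union>P = A" using partition_onD1[OF assms(1)] by simp
  have "\<forall>J\<in>P. finite J" using assms(2) union by (auto intro: finite_subset)
  moreover have "\<forall>J\<in>P. \<forall>J'\<in>P. J \<noteq> J' \<longrightarrow> J \<inter> J' = {}"
    using partition_onD2[OF assms(1)] unfolding disjoint_def by blast
  ultimately have "sum g (\<Union>P) = (sum \<circ> sum) g P"
    by (rule sum.Union_disjoint)
  with union show ?thesis by simp
qed

lemma partition_on_obtain_blockwise_const: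
  assumes "partition_on A P"
  obtains v where "\<And>J k. J \<in> P \<Longrightarrow> k \<in> J \<Longrightarrow> v k = w J"
proof (rule that[of "\<lambda>k. w (SOME J. J \<in> P \<and> k \<in> J)"])
  fix J k assume J: "J \<in> P" "k \<in> J"
  define J' where "J' = (SOME J. J \<in> P \<and> k \<in> J)"
  from J have "\<exists>J. J \<in> P \<and> k \<in> J" by blast
  then have "J' \<in> P \<and> k \<in> J'"
    unfolding J'_def by (rule someI_ex)
  with J have "J' = J"
    using partition_onD2[OF assms] unfolding disjoint_def by blast
  then show "w J' = w J" by simp
qed

lemma LR_le_at_origin:
  assumes "\<forall>k\<in>{1..K}. v k \<in> F k"
  shows "LR c F K lam \<le> ereal (\<Sum>k\<in>{1..K}. lam k \<bullet> v k)"
proof -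
  have "LR c F K lam \<le> ereal ((c - (\<Sum>k\<in>{1..K}. lam k)) \<bullet> 0 + (\<Sum>k\<in>{1..K}. lam k \<bullet> v k))"
    unfolding LR_def
    by (rule Inf_lower, rule CollectI, rule exI[of _ 0], rule exI[of _ v]) (simp add: assms)
  then show ?thesis by simp
qed

lemma LR_le_blockwise:
  assumes part: "partition_on {1..K} P"
    and w: "\<And>J. J \<in> P \<Longrightarrow> w J \<in> (\<Inter>k\<in>J. F k)"
  shows "LR c F K lam \<le> ereal (\<Sum>J\<in>P. (\<Sum>j\<in>J. lam j) \<bullet> w J)"
proof -
  obtain v where v: "\<And>J k. J \<in> P \<Longrightarrow> k \<in> J \<Longrightarrow> v k = w J"
    using partition_on_obtain_blockwise_const[OF part] by blast
  have "\<forall>k\<in>{1..K}. v k \<in> F k"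
  proof
    fix k assume "k \<in> {1..K}"
    then obtain J where J: "J \<in> P" "k \<in> J"
      using partition_onD1[OF part] by blast
    with w[OF J(1)] show "v k \<in> F k" by (simp add: v)
  qed
  then have "LR c F K lam \<le> ereal (\<Sum>k\<in>{1..K}. lam k \<bullet> v k)"
    by (rule LR_le_at_origin)
  also have "(\<Sum>k\<in>{1..K}. lam k \<bullet> v k) = (\<Sum>J\<in>P. \<Sum>k\<in>J. lam k \<bullet> v k)"
    using part by (intro sum_partition_on) simp_all
  also have "\<dots> = (\<Sum>J\<in>P. (\<Sum>j\<in>J. lam j) \<bullet> w J)"
    using v by (intro sum.cong refl) (simp add: inner_sum_left)
  finally show ?thesis .
qed

lemma compact_obtain_INF_inner_attained:
  fixes S :: "'a::real_inner set"
  assumes "compact S" "S \<noteq> {}"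
  obtains w where "w \<in> S" "(INF v\<in>S. ereal (\<mu> \<bullet> v)) = ereal (\<mu> \<bullet> w)"
proof -
  have "continuous_on S (\<lambda>v. \<mu> \<bullet> v)"
    by (intro continuous_intros)
  then obtain w where w: "w \<in> S" "\<And>y. y \<in> S \<Longrightarrow> \<mu> \<bullet> w \<le> \<mu> \<bullet> y"
    using continuous_attains_inf[OF assms] by blast
  have "(INF v\<in>S. ereal (\<mu> \<bullet> v)) = ereal (\<mu> \<bullet> w)"
    using w by (intro antisym INF_lower INF_greatest) auto
  with w(1) show thesis by (rule that)
qed

lemma LP_infinite_if_empty_block:
  assumes "finite P" "J \<in> P" "(\<Inter>k\<in>J. F k) = {}"
  shows "LP F P \<mu> = \<infinity>"
  unfolding LP_def sum_Pinfty using assms by (intro conjI bexI[of _ J]) (auto simp: top_ereal_def)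

lemma LP_obtain_minimisers:
  assumes "\<And>J. J \<in> P \<Longrightarrow> compact (\<Inter>k\<in>J. F k)"
    and "\<And>J. J \<in> P \<Longrightarrow> (\<Inter>k\<in>J. F k) \<noteq> {}"
  obtains w where "\<And>J. J \<in> P \<Longrightarrow> w J \<in> (\<Inter>k\<in>J. F k)"
    and "LP F P \<mu> = ereal (\<Sum>J\<in>P. \<mu> J \<bullet> w J)"
proof -
  have "\<exists>w. w \<in> (\<Inter>k\<in>J. F k) \<and>
      (INF v\<in>\<Inter>k\<in>J. F k. ereal (\<mu> J \<bullet> v)) = ereal (\<mu> J \<bullet> w)" if "J \<in> P" for J
    using assms[OF that] by (elim compact_obtain_INF_inner_attained) auto
  then obtain w where w: "\<And>J. J \<in> P \<Longrightarrow> w J \<in> (\<Inter>k\<in>J. F k)"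
    and min: "\<And>J. J \<in> P \<Longrightarrow>
      (INF v\<in>\<Inter>k\<in>J. F k. ereal (\<mu> J \<bullet> v)) = ereal (\<mu> J \<bullet> w J)"
    by metis
  have "LP F P \<mu> = ereal (\<Sum>J\<in>P. \<mu> J \<bullet> w J)"
    unfolding LP_def using min by simp
  with w show thesis by (rule that)
qed

theorem proposition4:
  fixes c :: "'a::euclidean_space"
    and K :: nat
    and D :: "nat \<Rightarrow> 'b set"
    and C :: "nat \<Rightarrow> 'b \<Rightarrow> 'a set"
    and F :: "nat \<Rightarrow> 'a set"
    and lam :: "nat \<Rightarrow> 'a"
    and P :: "nat set set"
  assumes D_fin: "\<And>k. k \<in> {1..K} \<Longrightarrow> finite (D k)"
    and C_cpt: "\<And>k i. k \<in> {1..K} \<Longrightarrow> i \<in> D k \<Longrightarrow> compact (C k i)"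
    and C_cvx: "\<And>k i. k \<in> {1..K} \<Longrightarrow> i \<in> D k \<Longrightarrow> convex (C k i)"
    and F_def: "\<And>k. k \<in> {1..K} \<Longrightarrow> F k = (\<Union>i\<in>D k. C k i)"
    and part: "partition_on {1..K} P"
  shows "LP F P (\<lambda>J. \<Sum>j\<in>J. lam j) \<ge> LR c F K lam"
proof (cases "\<exists>J\<in>P. (\<Inter>k\<in>J. F k) = {}")
  case True
  then show ?thesis
    using LP_infinite_if_empty_block finite_elements[OF _ part] by fastforce
next
  case False
  have F_cpt: "compact (F k)" if "k \<in> {1..K}" for k
    using that F_def D_fin C_cpt by (metis compact_UN)
  have "compact (\<Inter>k\<in>J. F k)" if J: "J \<in> P" for J
  proof -
    have "J \<subseteq> {1..K}" "J \<noteq> {}"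
      using J partition_onD1[OF part] partition_onD3[OF part] by auto
    then show ?thesis
      using F_cpt by (intro compact_Inter) auto
  qed
  with False obtain w where w: "\<And>J. J \<in> P \<Longrightarrow> w J \<in> (\<Inter>k\<in>J. F k)"
    and LP_eq: "LP F P (\<lambda>J. \<Sum>j\<in>J. lam j) = ereal (\<Sum>J\<in>P. (\<Sum>j\<in>J. lam j) \<bullet> w J)"
    by (elim LP_obtain_minimisers[where \<mu> = "\<lambda>J. \<Sum>j\<in>J. lam j"]) auto
  have "LR c F K lam \<le> ereal (\<Sum>J\<in>P. (\<Sum>j\<in>J. lam j) \<bullet> w J)"
    using part w by (rule LR_le_blockwise)
  with LP_eq show ?thesis by simp
qed

end
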